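(* Let $M$ be a smooth manifold, $Y$ a complex manifold and $\mathcal{F}$ a holomorphic foliation on $Y$. The first-order differential relation $\mathcal{R}_{\mathbb{C}Tr}\subseteq J^1(M,Y)$ consisting of 1-jets $(x,y,L)$, $L:T_xM\to T_yY$, such that $\pi\circ L:T_xM\to N_y\mathcal{F}$ is a $\mathbb{C}$-epimorphism (so that its $C^1$ solutions are exactly the maps $\mathbb{C}$-transverse to $\mathcal{F}$) is ample in the coordinate directions.
   Context: $N\mathcal{F}=TY/T\mathcal{F}$ and $\pi:TY\to N\mathcal{F}$ is the projection. An $\mathbb{R}$-linear map $\Phi:V\to W$ from a real vector space to a complex vector space is a $\mathbb{C}$-epimorphism if $z\otimes v\mapsto z\Phi(v)$, $\mathbb{C}\otimes V\to W$, is surjective. A map $f:M\to Y$ is $\mathbb{C}$-transverse to $\mathcal{F}$ if $\pi\circ df$ is a $\mathbb{C}$-epimorphism at every point. A relation $\mathcal{R}\subseteq J^1(M,Y)$ is ample in the coordinate directions if, in local coordinates $x_1,\dots,x_n$ on $M$, for every $j$ and every fixed choice of $(x,y)$ and of all partial derivatives except the $j$-th, the set of values $v$ of the $j$-th partial derivative for which the resulting jet lies in $\mathcal{R}$ is either empty or has the property that the convex hull of each of its path components is the whole space. *)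

theory Defs
  imports "HOL-Analysis.Analysis"
begin

text \<open>An R-linear map Phi from R^n (standard basis indexed by 'n) to a complex
  vector space W = complex^'q, given by its values c i = Phi(e_i), is a
  C-epimorphism iff z (x) v |-> z Phi(v), C (x) R^n -> W, is surjective.
  Since C (x) R^n has C-basis 1 (x) e_i, its elements are sums of z_i (x) e_i.\<close>
definition C_epi :: "('n::finite \<Rightarrow> complex^'q) \<Rightarrow> bool" where
  "C_epi c \<longleftrightarrow> (\<forall>w::complex^'q. \<exists>z::'n \<Rightarrow> complex. w = (\<Sum>i\<in>UNIV. z i *s c i))"

text \<open>The fibre of R_CTr in local coordinates: x_1..x_n on M (index type 'n),
  T_yY = complex^'m, and pi_y : T_yY -> N_yF a surjective complex-linear map,
  represented by the complex matrix P. A 1-jet with partial derivatives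
  L i = df(d/dx_i) lies in R_CTr iff pi o L is a C-epimorphism.\<close>
definition R_CTr :: "complex^'m^'q \<Rightarrow> ('n::finite \<Rightarrow> complex^'m) \<Rightarrow> bool" where
  "R_CTr P L \<longleftrightarrow> C_epi (\<lambda>i. P *v L i)"

end

theory Submission
  imports Defs
begin

text \<open>A vector \<open>v\<close> lies in \<open>S\<close> iff \<open>P v\<close>, together with the vectors \<open>P (L i)\<close> for \<open>i \<noteq> j\<close>,
  spans \<open>\<complex>\<^sup>q\<close> over \<open>\<complex>\<close>. Fix \<open>v\<^sub>0 \<in> S\<close>: then \<open>v \<in> S\<close> iff \<open>P v \<equiv> g P v\<^sub>0\<close> modulo the span of the
  others for some complex \<open>g \<noteq> 0\<close>. Each \<open>v \<in> S\<close> is joined to \<open>g v\<^sub>0\<close> by a straight segment in \<open>S\<close>,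
  and \<open>g v\<^sub>0\<close> to \<open>v\<^sub>0\<close> inside the punctured complex line \<open>(\<complex> - {0}) v\<^sub>0\<close>, which is connected
  because \<open>\<complex> - {0}\<close> is; this is where complex scalars matter. So \<open>S\<close> is path connected, and its
  convex hull is everything: each \<open>x\<close> is the midpoint of \<open>x + c v\<^sub>0\<close> and \<open>x - c v\<^sub>0\<close>, which lie
  in \<open>S\<close> once \<open>|c|\<close> is large.\<close>

lemma scaleR_eq_of_real_smult: "(r::real) *\<^sub>R (x::complex^'k) = complex_of_real r *s x"
  unfolding vec_eq_iff vector_scaleR_component vector_smult_component
  by (simp add: scaleR_conv_of_real)

lemma vec_span_range:
  fixes c :: "'n::finite \<Rightarrow> 'a::field^'q"
  shows "vec.span (range c) = range (\<lambda>z. \<Sum>i\<in>UNIV. z i *s c i)"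
proof
  show "vec.span (range c) \<subseteq> range (\<lambda>z. \<Sum>i\<in>UNIV. z i *s c i)"
  proof
    fix w assume "w \<in> vec.span (range c)"
    then show "w \<in> range (\<lambda>z. \<Sum>i\<in>UNIV. z i *s c i)"
    proof (induction rule: vec.span_induct_alt)
      case base
      show ?case by (rule range_eqI[of _ _ "\<lambda>_. 0"]) simp
    next
      case (step a x y)
      then obtain i z where "x = c i" "y = (\<Sum>k\<in>UNIV. z k *s c k)" by blast
      then have "a *s x + y = (\<Sum>k\<in>UNIV. (z(i := z i + a)) k *s c k)"
        by (simp add: sum.remove[of UNIV i] vector_sadd_rdistrib algebra_simps)
      then show ?case by blast
    qed
  qed
  show "range (\<lambda>z. \<Sum>i\<in>UNIV. z i *s c i) \<subseteq> vec.span (range c)"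
    by (auto intro!: vec.span_sum vec.span_scale intro: vec.span_base)
qed

lemma C_epi_iff_span: "C_epi c \<longleftrightarrow> vec.span (range c) = UNIV"
  unfolding C_epi_def vec_span_range by blast

definition span_completing :: "('a::field^'q) set \<Rightarrow> ('a^'q) set" where
  "span_completing A = {p. vec.span (insert p A) = UNIV}"

lemma R_CTr_fun_upd_iff:
  "R_CTr P (L(j := v)) \<longleftrightarrow> P *v v \<in> span_completing ((\<lambda>i. P *v L i) ` (- {j}))"
proof -
  have "range (\<lambda>i. P *v (L(j := v)) i) = insert (P *v v) ((\<lambda>i. P *v L i) ` (- {j}))"
    by auto
  then show ?thesis
    unfolding R_CTr_def C_epi_iff_span span_completing_def by simp
qed

lemma span_completing_iff:
  assumes "p\<^sub>0 \<in> span_completing A"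
  shows "p \<in> span_completing A \<longleftrightarrow> (\<exists>g. g \<noteq> 0 \<and> p - g *s p\<^sub>0 \<in> vec.span A)"
proof
  assume p: "p \<in> span_completing A"
  show "\<exists>g. g \<noteq> 0 \<and> p - g *s p\<^sub>0 \<in> vec.span A"
  proof (cases "p \<in> vec.span A")
    case True
    then have "p\<^sub>0 \<in> vec.span A"
      using p vec.span_redundant unfolding span_completing_def by blast
    then show ?thesis
      using True by (intro exI[of _ 1]) (simp add: vec.span_diff)
  next
    case False
    obtain g where g: "p - g *s p\<^sub>0 \<in> vec.span A"
      using assms vec.span_breakdown_eq unfolding span_completing_def by blast
    with False have "g \<noteq> 0" by auto
    with g show ?thesis by blast
  qed
next
  assume "\<exists>g. g \<noteq> 0 \<and> p - g *s p\<^sub>0 \<in> vec.span A"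
  then obtain g where "g \<noteq> 0" and g: "p - g *s p\<^sub>0 \<in> vec.span A" by blast
  then have "p\<^sub>0 - inverse g *s p = - inverse g *s (p - g *s p\<^sub>0)"
    by (simp add: vector_ssub_ldistrib)
  with g have "p\<^sub>0 \<in> vec.span (insert p A)"
    unfolding vec.span_breakdown_eq by (metis vec.span_scale)
  then have "vec.span (insert p\<^sub>0 A) \<subseteq> vec.span (insert p A)"
    by (intro vec.span_minimal vec.subspace_span) (auto intro: vec.span_base)
  then show "p \<in> span_completing A"
    using assms unfolding span_completing_def by auto
qed

lemma preimage_span_completing_iff:
  assumes "P *v v\<^sub>0 \<in> span_completing A"
  shows "P *v v \<in> span_completing A \<longleftrightarrow> (\<exists>g. g \<noteq> 0 \<and> P *v (v - g *s v\<^sub>0) \<in> vec.span A)"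
  by (simp add: span_completing_iff[OF assms] vec.diff vec.scale)

lemma closed_segment_subset_preimage:
  fixes P :: "complex^'m^'q"
  assumes v\<^sub>0: "P *v v\<^sub>0 \<in> span_completing A"
    and "g \<noteq> 0" and v: "P *v (v - g *s v\<^sub>0) \<in> vec.span A"
  shows "closed_segment v (g *s v\<^sub>0) \<subseteq> (\<lambda>v. P *v v) -` span_completing A"
proof
  fix x assume "x \<in> closed_segment v (g *s v\<^sub>0)"
  then obtain t where "x = (1 - t) *\<^sub>R v + t *\<^sub>R (g *s v\<^sub>0)"
    unfolding closed_segment_def by blast
  then have "x - g *s v\<^sub>0 = complex_of_real (1 - t) *s (v - g *s v\<^sub>0)"
    by (simp add: scaleR_eq_of_real_smult vec_eq_iff algebra_simps)
  then have "P *v (x - g *s v\<^sub>0) = complex_of_real (1 - t) *s (P *v (v - g *s v\<^sub>0))"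
    by (simp only: vec.scale)
  then have "P *v (x - g *s v\<^sub>0) \<in> vec.span A"
    using v vec.span_scale by metis
  then show "x \<in> (\<lambda>v. P *v v) -` span_completing A"
    using preimage_span_completing_iff[OF v\<^sub>0] \<open>g \<noteq> 0\<close> by auto
qed

lemma punctured_line_subset_preimage:
  fixes P :: "'a::field^'m^'q"
  assumes "P *v v\<^sub>0 \<in> span_completing A"
  shows "(\<lambda>c. c *s v\<^sub>0) ` (- {0}) \<subseteq> (\<lambda>v. P *v v) -` span_completing A"
proof (rule image_subsetI)
  fix c :: 'a assume "c \<in> - {0}"
  then show "c *s v\<^sub>0 \<in> (\<lambda>v. P *v v) -` span_completing A"
    using preimage_span_completing_iff[OF assms, of "c *s v\<^sub>0"]
    by (auto intro!: exI[of _ c] simp: vec.span_zero)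
qed

lemma path_connected_preimage_span_completing:
  fixes P :: "complex^'m^'q"
  shows "path_connected ((\<lambda>v. P *v v) -` span_completing A)" (is "path_connected ?S")
  unfolding path_connected_component
proof (intro ballI)
  fix v\<^sub>0 v assume v\<^sub>0: "v\<^sub>0 \<in> ?S" and v: "v \<in> ?S"
  then obtain g where g: "g \<noteq> 0" "P *v (v - g *s v\<^sub>0) \<in> vec.span A"
    using preimage_span_completing_iff by blast
  with v\<^sub>0 have "closed_segment v (g *s v\<^sub>0) \<subseteq> ?S"
    by (intro closed_segment_subset_preimage) auto
  then have "path_component ?S v (g *s v\<^sub>0)"
    by (meson path_component_of_subset path_connected_component path_connected_segment
        ends_in_segment)
  moreover have "path_component ?S (g *s v\<^sub>0) v\<^sub>0"
  proof -
    let ?line = "(\<lambda>c. c *s v\<^sub>0) ` (- {0::complex})"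
    have "path_connected ?line"
    proof (rule path_connected_continuous_image)
      show "continuous_on (- {0}) (\<lambda>c::complex. c *s v\<^sub>0)"
        unfolding vector_scalar_mult_def by (intro continuous_intros)
      show "path_connected (- {0::complex})"
        by (rule path_connected_punctured_universe) simp
    qed
    moreover have "g *s v\<^sub>0 \<in> ?line"
      using g by blast
    moreover have "v\<^sub>0 \<in> ?line"
      by (rule image_eqI[of _ _ 1]) (simp_all add: vec_eq_iff)
    moreover have "?line \<subseteq> ?S"
      using v\<^sub>0 by (intro punctured_line_subset_preimage) simp
    ultimately show ?thesis
      by (meson path_component_of_subset path_connected_component)
  qed
  ultimately show "path_component ?S v\<^sub>0 v"
    using path_component_trans path_component_sym by blast
qed

lemma convex_hull_preimage_span_completing:
  fixes P :: "complex^'m^'q"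
  assumes v\<^sub>0: "P *v v\<^sub>0 \<in> span_completing A"
  shows "convex hull ((\<lambda>v. P *v v) -` span_completing A) = UNIV" (is "convex hull ?S = _")
proof -
  have "x \<in> convex hull ?S" for x
  proof -
    obtain b where b: "P *v x - b *s (P *v v\<^sub>0) \<in> vec.span A"
      using v\<^sub>0 vec.span_breakdown_eq unfolding span_completing_def by blast
    have shifted: "x + k *s v\<^sub>0 \<in> convex hull ?S" if "b + k \<noteq> 0" for k
    proof -
      have "(x + k *s v\<^sub>0) - (b + k) *s v\<^sub>0 = x - b *s v\<^sub>0"
        by (simp add: vec_eq_iff algebra_simps)
      moreover have "P *v (x - b *s v\<^sub>0) \<in> vec.span A"
        using b by (simp add: vec.diff vec.scale)
      ultimately have "x + k *s v\<^sub>0 \<in> ?S"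
        using preimage_span_completing_iff[OF v\<^sub>0] that by auto
      then show ?thesis
        by (rule hull_inc)
    qed
    define c where "c = complex_of_real (norm b + 1)"
    have "norm c = norm b + 1"
      by (simp add: c_def)
    then have "b + c \<noteq> 0" "b + - c \<noteq> 0"
      by (auto simp: add_eq_0_iff2)
    then have "(1/2) *\<^sub>R (x + c *s v\<^sub>0) + (1/2) *\<^sub>R (x + - c *s v\<^sub>0) \<in> convex hull ?S"
      by (intro convexD[OF convex_convex_hull] shifted) auto
    moreover have "(1/2) *\<^sub>R (x + c *s v\<^sub>0) + (1/2) *\<^sub>R (x + - c *s v\<^sub>0) = x"
      by (simp add: scaleR_eq_of_real_smult vec_eq_iff algebra_simps)
    ultimately show ?thesis by simp
  qed
  then show ?thesis by blast
qed

theorem lemma3p2: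
  fixes P :: "complex^'m^'q"
    and L :: "'n::finite \<Rightarrow> complex^'m"
    and j :: 'n
  assumes "surj (\<lambda>v. P *v v)"
  defines "S \<equiv> {v::complex^'m. R_CTr P (L(j := v))}"
  shows "S = {} \<or> (\<forall>v\<in>S. convex hull (path_component_set S v) = UNIV)"
proof -
  define A where "A = (\<lambda>i. P *v L i) ` (- {j})"
  have S_eq: "S = (\<lambda>v. P *v v) -` span_completing A"
    unfolding S_def A_def by (auto simp: R_CTr_fun_upd_iff)
  have "convex hull (path_component_set S v) = UNIV" if "v \<in> S" for v
  proof -
    have "path_component_set S v = S"
      using that path_connected_preimage_span_completing path_connected_component_set S_eq
      by metis
    moreover have "convex hull S = UNIV"
      using that unfolding S_eq by (intro convex_hull_preimage_span_completing) simp
    ultimately show ?thesis by simp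
  qed
  then show ?thesis by blast
qed

end
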